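(* Let $A,B$ be strongly regular graphs with the same parameters $\sigma(A)=(n,d,\lambda,\mu)$, and let $A',B'$ be partially colored versions with port vertices $a_1,\dots,a_m$, $b_1,\dots,b_m$ as in the construction, such that $\tau(a_i)=\tau(b_i)$ for all $i$. Then for vertices $x,y$ of $G(A',B')$, the sequence $(w_k(x,y))_{k\ge0}$ is determined solely by $\eta(x,y)$, $\tau(A')$ and $\sigma(A)$: if $(\hat A',\hat B')$ is another such pair with $\sigma(\hat A)=\sigma(A)$ and $\tau(\hat A')=\tau(A')$, and $x,y\in V(G(A',B'))$, $\hat x,\hat y\in V(G(\hat A',\hat B'))$ satisfy $\eta(x,y)=\eta(\hat x,\hat y)$, then $w_k(x,y)=w_k(\hat x,\hat y)$ for all $k\ge0$.
   Context: Graphs are finite, simple and undirected. A strongly regular graph with parameters $(n,d,\lambda,\mu)$ is an $n$-vertex $d$-regular graph in which any two adjacent vertices have $\lambda$ common neighbours and any two distinct non-adjacent vertices have $\mu$ common neighbours. $A'$ (resp. $B'$) is $A$ (resp. $B$) with $a_i$ (resp. $b_i$) colored $i$ for $i=1,\dots,m$ and all other vertices uncolored. Construction $G(A',B')$ (uncolored): the vertex-disjoint union of $A$ and $B$, plus for each $i$ a connecting vertex $c_i$ adjacent to $a_i$ and $b_i$ and $i$ pendant vertices $p_{i,1},\dots,p_{i,i}$ adjacent only to $c_i$. $w_k(x,y)$ is the number of walks of length $k$ from $x$ to $y$ in $G(A',B')$. Color refinement on a vertex-colored graph $X$: $C^0_X(x)$ is the color of $x$ (common default for uncolored vertices), $C^{1}_X(x)=\big(C^0_X(x),\{\!\{C^0_X(y)\}\!\}_{y\in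 N(x)}\big)$. Types: $\tau(x)=C^1_{A'}(x)$ for $x\in V(A)$, $\tau(x)=C^1_{B'}(x)$ for $x\in V(B)$, $\tau(c_i)=(\mathfrak c,\tau(a_i))$, $\tau(p_{i,h})=(\mathfrak p,\tau(a_i))$ for special symbols $\mathfrak c,\mathfrak p$. $\tau(A')=(\tau(a_1),\dots,\tau(a_m))$. $D(x,y)=1$ iff $x,y$ both lie in the $A$-part or both in the $B$-part, else $0$; $I(x,y)=1$ iff $x=y$; $A(x,y)=1$ iff $x,y$ adjacent. $\eta(x,y)=(\tau(x),D(x,y),I(x,y),A(x,y),\tau(y))$. *)

theory Defs
  imports Main "HOL-Library.Multiset"
begin

definition simple_graph :: "'v set \<Rightarrow> ('v \<Rightarrow> 'v \<Rightarrow> bool) \<Rightarrow> bool" where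
  "simple_graph V E \<longleftrightarrow> finite V \<and> (\<forall>x y. E x y \<longrightarrow> x \<in> V \<and> y \<in> V)
     \<and> (\<forall>x y. E x y \<longrightarrow> E y x) \<and> (\<forall>x. \<not> E x x)"

definition strongly_regular ::
  "'v set \<Rightarrow> ('v \<Rightarrow> 'v \<Rightarrow> bool) \<Rightarrow> nat \<Rightarrow> nat \<Rightarrow> nat \<Rightarrow> nat \<Rightarrow> bool" where
  "strongly_regular V E n d lam mu \<longleftrightarrow> simple_graph V E \<and> card V = n
     \<and> (\<forall>x\<in>V. card {y\<in>V. E x y} = d)
     \<and> (\<forall>x\<in>V. \<forall>y\<in>V. x \<noteq> y \<longrightarrow> E x y \<longrightarrow> card {z\<in>V. E x z \<and> E y z} = lam)
     \<and> (\<forall>x\<in>V. \<forall>y\<in>V. x \<noteq> y \<longrightarrow> \<not> E x y \<longrightarrow> card {z\<in>V. E x z \<and> E y z} = mu)"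

definition col0 :: "(nat \<Rightarrow> 'v) \<Rightarrow> nat \<Rightarrow> 'v \<Rightarrow> nat option" where
  "col0 a m x = (if \<exists>i\<in>{1..m}. a i = x then Some (THE i. i \<in> {1..m} \<and> a i = x) else None)"

type_synonym colour1 = "nat option \<times> nat option multiset"

definition col1 :: "'v set \<Rightarrow> ('v \<Rightarrow> 'v \<Rightarrow> bool) \<Rightarrow> (nat \<Rightarrow> 'v) \<Rightarrow> nat \<Rightarrow> 'v \<Rightarrow> colour1" where
  "col1 V E a m x = (col0 a m x, image_mset (col0 a m) (mset_set {y\<in>V. E x y}))"

datatype ('a, 'b) gvert = VA 'a | VB 'b | VC nat | VP nat nat

definition gverts :: "'a set \<Rightarrow> 'b set \<Rightarrow> nat \<Rightarrow> ('a, 'b) gvert set" where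
  "gverts VA' VB' m = VA ` VA' \<union> VB ` VB' \<union> VC ` {1..m}
     \<union> {VP i h | i h. 1 \<le> i \<and> i \<le> m \<and> 1 \<le> h \<and> h \<le> i}"

fun gadj :: "('a \<Rightarrow> 'a \<Rightarrow> bool) \<Rightarrow> ('b \<Rightarrow> 'b \<Rightarrow> bool) \<Rightarrow> (nat \<Rightarrow> 'a) \<Rightarrow> (nat \<Rightarrow> 'b) \<Rightarrow> nat
              \<Rightarrow> ('a, 'b) gvert \<Rightarrow> ('a, 'b) gvert \<Rightarrow> bool" where
  "gadj EA EB a b m (VA x) (VA y) = EA x y"
| "gadj EA EB a b m (VB x) (VB y) = EB x y"
| "gadj EA EB a b m (VA x) (VC i) = (1 \<le> i \<and> i \<le> m \<and> x = a i)"
| "gadj EA EB a b m (VC i) (VA x) = (1 \<le> i \<and> i \<le> m \<and> x = a i)"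
| "gadj EA EB a b m (VB x) (VC i) = (1 \<le> i \<and> i \<le> m \<and> x = b i)"
| "gadj EA EB a b m (VC i) (VB x) = (1 \<le> i \<and> i \<le> m \<and> x = b i)"
| "gadj EA EB a b m (VC i) (VP j h) = (i = j \<and> 1 \<le> i \<and> i \<le> m \<and> 1 \<le> h \<and> h \<le> i)"
| "gadj EA EB a b m (VP j h) (VC i) = (i = j \<and> 1 \<le> i \<and> i \<le> m \<and> 1 \<le> h \<and> h \<le> i)"
| "gadj EA EB a b m _ _ = False"

fun walks :: "'v set \<Rightarrow> ('v \<Rightarrow> 'v \<Rightarrow> bool) \<Rightarrow> nat \<Rightarrow> 'v \<Rightarrow> 'v \<Rightarrow> nat" where
  "walks V E 0 x y = (if x = y then 1 else 0)"
| "walks V E (Suc k) x y = (\<Sum>z\<in>{z\<in>V. E x z}. walks V E k z y)"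

(* types tau; TConn / TPend play the role of the special symbols c, p *)
datatype vtype = TBase colour1 | TConn colour1 | TPend colour1

fun gtau :: "'a set \<Rightarrow> ('a \<Rightarrow> 'a \<Rightarrow> bool) \<Rightarrow> (nat \<Rightarrow> 'a) \<Rightarrow>
             'b set \<Rightarrow> ('b \<Rightarrow> 'b \<Rightarrow> bool) \<Rightarrow> (nat \<Rightarrow> 'b) \<Rightarrow> nat \<Rightarrow> ('a, 'b) gvert \<Rightarrow> vtype" where
  "gtau VA' EA a VB' EB b m (VA x) = TBase (col1 VA' EA a m x)"
| "gtau VA' EA a VB' EB b m (VB x) = TBase (col1 VB' EB b m x)"
| "gtau VA' EA a VB' EB b m (VC i) = TConn (col1 VA' EA a m (a i))"
| "gtau VA' EA a VB' EB b m (VP i h) = TPend (col1 VA' EA a m (a i))"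

definition tau_seq :: "'a set \<Rightarrow> ('a \<Rightarrow> 'a \<Rightarrow> bool) \<Rightarrow> (nat \<Rightarrow> 'a) \<Rightarrow> nat \<Rightarrow> colour1 list" where
  "tau_seq VA' EA a m = map (\<lambda>i. col1 VA' EA a m (a i)) [1..<m+1]"

fun same_part :: "('a, 'b) gvert \<Rightarrow> ('a, 'b) gvert \<Rightarrow> bool" where
  "same_part (VA _) (VA _) = True"
| "same_part (VB _) (VB _) = True"
| "same_part _ _ = False"

definition eta :: "'a set \<Rightarrow> ('a \<Rightarrow> 'a \<Rightarrow> bool) \<Rightarrow> (nat \<Rightarrow> 'a) \<Rightarrow>
             'b set \<Rightarrow> ('b \<Rightarrow> 'b \<Rightarrow> bool) \<Rightarrow> (nat \<Rightarrow> 'b) \<Rightarrow> nat \<Rightarrow> ('a, 'b) gvert \<Rightarrow> ('a, 'b) gvert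
             \<Rightarrow> vtype \<times> bool \<times> bool \<times> bool \<times> vtype" where
  "eta VA' EA a VB' EB b m x y =
     (gtau VA' EA a VB' EB b m x, same_part x y, x = y, gadj EA EB a b m x y, gtau VA' EA a VB' EB b m y)"

definition valid_pair :: "'a set \<Rightarrow> ('a \<Rightarrow> 'a \<Rightarrow> bool) \<Rightarrow> (nat \<Rightarrow> 'a) \<Rightarrow>
             'b set \<Rightarrow> ('b \<Rightarrow> 'b \<Rightarrow> bool) \<Rightarrow> (nat \<Rightarrow> 'b) \<Rightarrow> nat \<Rightarrow> nat \<Rightarrow> nat \<Rightarrow> nat \<Rightarrow> nat \<Rightarrow> bool" where
  "valid_pair VA' EA a VB' EB b m n d lam mu \<longleftrightarrow>
     strongly_regular VA' EA n d lam mu \<and> strongly_regular VB' EB n d lam mu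
     \<and> inj_on a {1..m} \<and> a ` {1..m} \<subseteq> VA'
     \<and> inj_on b {1..m} \<and> b ` {1..m} \<subseteq> VB'
     \<and> (\<forall>i\<in>{1..m}. col1 VA' EA a m (a i) = col1 VB' EB b m (b i))"

end

theory Submission
  imports Defs
begin

text \<open>Fix the target vertex y. The indicator functions of a few vertex classes of G(A',B') --
the two parts, the ports of each part, the neighbourhoods of the ports inside a part, the
connecting and pendant vertices of each index, y itself and the neighbourhood of y inside its
part -- span a space of functions that the adjacency operator maps into itself. Strong regularity
makes the structure constants depend only on (n,d,\<lambda>,\<mu>), on the adjacency pattern of the ports
(recorded in \<tau>(A')) and on \<tau>(y). Hence w_k(-,y) is one fixed integer combination of these
indicators, and which of the classes contain x is read off from \<eta>(x,y).\<close>

lemma col0_eq_Some_iff: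
  assumes "inj_on a {1..m}"
  shows "col0 a m x = Some j \<longleftrightarrow> j \<in> {1..m} \<and> a j = x"
proof (cases "\<exists>i\<in>{1..m}. a i = x")
  case True
  then obtain i where i: "i \<in> {1..m}" "a i = x" by blast
  have "(THE i. i \<in> {1..m} \<and> a i = x) = i"
    using i assms by (auto intro!: the_equality dest: inj_onD)
  with i assms show ?thesis unfolding col0_def by (auto dest: inj_onD)
qed (auto simp: col0_def)

lemma count_col1_Some:
  assumes "inj_on a {1..m}" "a ` {1..m} \<subseteq> V" "finite V"
  shows "count (snd (col1 V E a m u)) (Some j) = of_bool (j \<in> {1..m} \<and> E u (a j))"
proof -
  have "col0 a m -` {Some j} = (if j \<in> {1..m} then {a j} else {})"
    using col0_eq_Some_iff[OF assms(1)] by auto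
  moreover have "count (snd (col1 V E a m u)) (Some j) = card (col0 a m -` {Some j} \<inter> {y\<in>V. E u y})"
    unfolding col1_def using assms(3) by (simp add: count_image_mset)
  moreover have "j \<in> {1..m} \<Longrightarrow> a j \<in> V" using assms(2) by auto
  ultimately show ?thesis by (cases "j \<in> {1..m} \<and> E u (a j)") auto
qed

lemma strongly_regular_common_neighbours:
  assumes srg: "strongly_regular W E n d lam mu" and "x \<in> W" "y \<in> W"
  shows "card {z\<in>W. E x z \<and> E z y} = (if x = y then d else if E x y then lam else mu)"
proof -
  have "\<And>u v. E u v \<Longrightarrow> E v u" using srg unfolding strongly_regular_def simple_graph_def by blast
  then have "{z\<in>W. E x z \<and> E z y} = {z\<in>W. E x z \<and> E y z}"
    and "x = y \<Longrightarrow> {z\<in>W. E x z \<and> E z y} = {z\<in>W. E x z}"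
    by blast+
  then show ?thesis using srg assms(2,3) unfolding strongly_regular_def by auto
qed

lemma strongly_regular_sum_neighbours_adj:
  assumes srg: "strongly_regular W E n d lam mu" and "u \<in> W" "c \<in> W"
  shows "(\<Sum>w\<in>{w\<in>W. E u w}. of_bool (E w c) :: int)
           = (int d - int mu) * of_bool (u = c) + (int lam - int mu) * of_bool (E u c) + int mu"
proof -
  have "finite W" "\<not> E c c" using srg unfolding strongly_regular_def simple_graph_def by auto
  moreover have "{w\<in>{w\<in>W. E u w}. E w c} = {w\<in>W. E u w \<and> E w c}" by blast
  ultimately show ?thesis
    using strongly_regular_common_neighbours[OF assms] by (simp add: Int_def)
qed

section \<open>Walk counts from a family of functions closed under adjacency\<close>

definition lc_eval :: "('l \<Rightarrow> 'v \<Rightarrow> int) \<Rightarrow> (int \<times> 'l) list \<Rightarrow> 'v \<Rightarrow> int" where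
  "lc_eval F e x = (\<Sum>(c, l)\<leftarrow>e. c * F l x)"

definition lc_subst :: "('l \<Rightarrow> (int \<times> 'l) list) \<Rightarrow> (int \<times> 'l) list \<Rightarrow> (int \<times> 'l) list" where
  "lc_subst R e = concat (map (\<lambda>(c, l). map (\<lambda>(c', l'). (c * c', l')) (R l)) e)"

lemma lc_eval_Nil [simp]: "lc_eval F [] x = 0"
  and lc_eval_Cons [simp]: "lc_eval F ((c, l) # e) x = c * F l x + lc_eval F e x"
  and lc_eval_append [simp]: "lc_eval F (e1 @ e2) x = lc_eval F e1 x + lc_eval F e2 x"
  by (simp_all add: lc_eval_def)

lemma lc_eval_scale: "lc_eval F (map (\<lambda>(c', l'). (c * c', l')) e) x = c * lc_eval F e x"
  by (induction e) (auto simp: algebra_simps)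

lemma sum_lc_eval_subst:
  assumes "\<And>l. (\<Sum>z\<in>S. F l z) = lc_eval F (R l) x"
  shows "(\<Sum>z\<in>S. lc_eval F e z) = lc_eval F (lc_subst R e) x"
proof (induction e)
  case Nil
  then show ?case by (simp add: lc_subst_def)
next
  case (Cons p e)
  obtain c l where p: "p = (c, l)" by fastforce
  have "(\<Sum>z\<in>S. lc_eval F (p # e) z) = c * (\<Sum>z\<in>S. F l z) + (\<Sum>z\<in>S. lc_eval F e z)"
    by (simp add: p sum.distrib sum_distrib_left)
  then show ?case
    using Cons assms[of l] by (simp add: p lc_subst_def lc_eval_scale)
qed

lemma walks_eq_lc_eval:
  assumes closed: "\<And>l x. x \<in> V \<Longrightarrow> (\<Sum>z\<in>{z\<in>V. E x z}. F l z) = lc_eval F (R l) x"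
    and target: "\<And>x. x \<in> V \<Longrightarrow> F t x = of_bool (x = y)"
    and "x \<in> V"
  shows "int (walks V E k x y) = lc_eval F ((lc_subst R ^^ k) [(1, t)]) x"
  using \<open>x \<in> V\<close>
proof (induction k arbitrary: x)
  case 0
  then show ?case using target by simp
next
  case (Suc k)
  have "int (walks V E (Suc k) x y) = (\<Sum>z\<in>{z\<in>V. E x z}. int (walks V E k z y))"
    by simp
  also have "\<dots> = (\<Sum>z\<in>{z\<in>V. E x z}. lc_eval F ((lc_subst R ^^ k) [(1, t)]) z)"
    using Suc.IH by (intro sum.cong) auto
  also have "\<dots> = lc_eval F (lc_subst R ((lc_subst R ^^ k) [(1, t)])) x"
    by (rule sum_lc_eval_subst) (use closed Suc.prems in auto)
  finally show ?case by simp
qed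

section \<open>A walk-closed family of vertex classes of G(A',B')\<close>

text \<open>Classes are taken relative to a side s (True for the A-part); the Boolean argument of
Part, Port and PortNbr is True for the class inside the part opposite to s. Target and
TargetNbr are the target vertex y and its neighbourhood inside its own part.\<close>

datatype cell = Part bool | Port bool nat | PortNbr bool nat | Conn nat | Pend nat
  | Target | TargetNbr

text \<open>BaseTarget P Q describes a target in A or B: P i says that it is port i, Q i that it is
adjacent to port i.\<close>

datatype target_kind = BaseTarget "nat \<Rightarrow> bool" "nat \<Rightarrow> bool" | ConnTarget nat | PendTarget nat

text \<open>A named constant, so that the simplifier does not unfold [1..<m+1] by upt_Suc.\<close>

definition port_indices :: "nat \<Rightarrow> nat list" where
  "port_indices m = [1..<m+1]"

lemma lc_eval_map_port_indices [simp]: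
  "lc_eval F (map (\<lambda>i. (c i, l i)) (port_indices m)) x = (\<Sum>i\<in>{1..m}. c i * F (l i) x)"
proof -
  have "lc_eval F (map (\<lambda>i. (c i, l i)) (port_indices m)) x = (\<Sum>i\<in>{1..<m+1}. c i * F (l i) x)"
    by (simp add: lc_eval_def port_indices_def comp_def sum_list_distinct_conv_sum_set del: upt_Suc)
  also have "{1..<m+1} = {1..m}" by auto
  finally show ?thesis .
qed

text \<open>Summing the indicator of class l over the neighbours of a vertex gives the combination
cell_step \<dots> l of the class indicators at that vertex; the coefficients of PortNbr and TargetNbr
are the common-neighbour counts of a strongly regular graph.\<close>

fun cell_step :: "nat \<Rightarrow> nat \<Rightarrow> nat \<Rightarrow> nat \<Rightarrow> (nat \<Rightarrow> nat \<Rightarrow> bool) \<Rightarrow> target_kind \<Rightarrow> cell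
                    \<Rightarrow> (int \<times> cell) list" where
  "cell_step d lam mu m P tk (Part q) = (int d, Part q) # map (\<lambda>i. (1, Conn i)) (port_indices m)"
| "cell_step d lam mu m P tk (Port q j) = [(1, PortNbr q j), (1, Conn j)]"
| "cell_step d lam mu m P tk (PortNbr q j) = (if j \<in> {1..m} then
      [(int d - int mu, Port q j), (int lam - int mu, PortNbr q j), (int mu, Part q)]
      @ map (\<lambda>i. (of_bool (P i j), Conn i)) (port_indices m) else [])"
| "cell_step d lam mu m P tk (Conn j) = [(1, Port False j), (1, Port True j), (1, Pend j)]"
| "cell_step d lam mu m P tk (Pend j) = [(int j, Conn j)]"
| "cell_step d lam mu m P tk Target = (case tk of
      BaseTarget isp adj \<Rightarrow> (1, TargetNbr) # map (\<lambda>i. (of_bool (isp i), Conn i)) (port_indices m)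
    | ConnTarget j \<Rightarrow> [(1, Port False j), (1, Port True j), (1, Pend j)]
    | PendTarget j \<Rightarrow> [(1, Conn j)])"
| "cell_step d lam mu m P tk TargetNbr = (case tk of
      BaseTarget isp adj \<Rightarrow> [(int d - int mu, Target), (int lam - int mu, TargetNbr), (int mu, Part False)]
         @ map (\<lambda>i. (of_bool (adj i), Conn i)) (port_indices m)
    | _ \<Rightarrow> [])"

lemma sum_of_bool_conj_eq:
  "finite S \<Longrightarrow> (\<Sum>w\<in>S. of_bool (P \<and> w = c) :: int) = of_bool (P \<and> c \<in> S)"
  by (cases P) (simp_all add: sum.delta)

locale ported_pair =
  fixes SA :: "'a set" and EA :: "'a \<Rightarrow> 'a \<Rightarrow> bool" and a :: "nat \<Rightarrow> 'a"
    and SB :: "'b set" and EB :: "'b \<Rightarrow> 'b \<Rightarrow> bool" and b :: "nat \<Rightarrow> 'b"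
    and m n d lam mu :: nat
  assumes valid: "valid_pair SA EA a SB EB b m n d lam mu"
begin

abbreviation "V \<equiv> gverts SA SB m"
abbreviation "Adj \<equiv> gadj EA EB a b m"

lemma srgA: "strongly_regular SA EA n d lam mu" and srgB: "strongly_regular SB EB n d lam mu"
  using valid unfolding valid_pair_def by auto

lemma finite_SA: "finite SA" and finite_SB: "finite SB"
  and EA_in: "EA x y \<Longrightarrow> x \<in> SA \<and> y \<in> SA" and EB_in: "EB u v \<Longrightarrow> u \<in> SB \<and> v \<in> SB"
  and EA_sym: "EA x y \<Longrightarrow> EA y x" and EB_sym: "EB u v \<Longrightarrow> EB v u"
  and degA: "x \<in> SA \<Longrightarrow> card {z\<in>SA. EA x z} = d"
  and degB: "u \<in> SB \<Longrightarrow> card {z\<in>SB. EB u z} = d"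
  using srgA srgB unfolding strongly_regular_def simple_graph_def by auto

lemma inj_a: "inj_on a {1..m}" and inj_b: "inj_on b {1..m}"
  and a_in: "a ` {1..m} \<subseteq> SA" and b_in: "b ` {1..m} \<subseteq> SB"
  and port_in_SA: "i \<in> {1..m} \<Longrightarrow> a i \<in> SA" and port_in_SB: "i \<in> {1..m} \<Longrightarrow> b i \<in> SB"
  and col1_a_eq_b: "i \<in> {1..m} \<Longrightarrow> col1 SA EA a m (a i) = col1 SB EB b m (b i)"
  using valid unfolding valid_pair_def by auto

lemma a_eq_iff: "i \<in> {1..m} \<Longrightarrow> j \<in> {1..m} \<Longrightarrow> a i = a j \<longleftrightarrow> i = j"
  and b_eq_iff: "i \<in> {1..m} \<Longrightarrow> j \<in> {1..m} \<Longrightarrow> b i = b j \<longleftrightarrow> i = j"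
  using inj_a inj_b by (auto dest: inj_onD)

lemma count_col1_A: "count (snd (col1 SA EA a m u)) (Some j) = of_bool (j \<in> {1..m} \<and> EA u (a j))"
  using count_col1_Some[OF inj_a a_in finite_SA] .

lemma count_col1_B: "count (snd (col1 SB EB b m u)) (Some j) = of_bool (j \<in> {1..m} \<and> EB u (b j))"
  using count_col1_Some[OF inj_b b_in finite_SB] .

text \<open>Equal colours of corresponding ports force the ports to induce the same graph in A and B.\<close>

lemma ports_adj_B_iff_A:
  assumes "i \<in> {1..m}" "j \<in> {1..m}"
  shows "EB (b i) (b j) \<longleftrightarrow> EA (a i) (a j)"
  using arg_cong[OF col1_a_eq_b[OF assms(1)], of "\<lambda>c. count (snd c) (Some j)"] assms(2)
  by (simp add: count_col1_A count_col1_B of_bool_eq_iff)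

lemma sum_nbrs_VA:
  assumes "u \<in> SA"
  shows "(\<Sum>z\<in>{z\<in>V. Adj (VA u) z}. g z)
           = (\<Sum>w\<in>{w\<in>SA. EA u w}. g (VA w)) + (\<Sum>i\<in>{i\<in>{1..m}. a i = u}. g (VC i))"
proof -
  have nbrs: "{z\<in>V. Adj (VA u) z} = VA ` {w\<in>SA. EA u w} \<union> VC ` {i\<in>{1..m}. a i = u}"
    by (rule set_eqI, case_tac x) (auto simp: gverts_def)
  have "(\<Sum>z\<in>{z\<in>V. Adj (VA u) z}. g z)
      = (\<Sum>z\<in>VA ` {w\<in>SA. EA u w}. g z) + (\<Sum>z\<in>VC ` {i\<in>{1..m}. a i = u}. g z)"
    unfolding nbrs by (rule sum.union_disjoint) (use finite_SA in auto)
  then show ?thesis by (simp add: sum.reindex inj_on_def)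
qed

lemma sum_nbrs_VB:
  assumes "u \<in> SB"
  shows "(\<Sum>z\<in>{z\<in>V. Adj (VB u) z}. g z)
           = (\<Sum>w\<in>{w\<in>SB. EB u w}. g (VB w)) + (\<Sum>i\<in>{i\<in>{1..m}. b i = u}. g (VC i))"
proof -
  have nbrs: "{z\<in>V. Adj (VB u) z} = VB ` {w\<in>SB. EB u w} \<union> VC ` {i\<in>{1..m}. b i = u}"
    by (rule set_eqI, case_tac x) (auto simp: gverts_def)
  have "(\<Sum>z\<in>{z\<in>V. Adj (VB u) z}. g z)
      = (\<Sum>z\<in>VB ` {w\<in>SB. EB u w}. g z) + (\<Sum>z\<in>VC ` {i\<in>{1..m}. b i = u}. g z)"
    unfolding nbrs by (rule sum.union_disjoint) (use finite_SB in auto)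
  then show ?thesis by (simp add: sum.reindex inj_on_def)
qed

lemma sum_nbrs_VC:
  assumes "i \<in> {1..m}"
  shows "(\<Sum>z\<in>{z\<in>V. Adj (VC i) z}. g z) = g (VA (a i)) + g (VB (b i)) + (\<Sum>h\<in>{1..i}. g (VP i h))"
proof -
  have nbrs: "{z\<in>V. Adj (VC i) z} = insert (VA (a i)) (insert (VB (b i)) (VP i ` {1..i}))"
  proof (intro set_eqI iffI)
    fix z :: "('a, 'b) gvert"
    assume "z \<in> {z\<in>V. Adj (VC i) z}"
    then show "z \<in> insert (VA (a i)) (insert (VB (b i)) (VP i ` {1..i}))"
      by (cases z) (auto simp: gverts_def)
  next
    fix z :: "('a, 'b) gvert"
    assume "z \<in> insert (VA (a i)) (insert (VB (b i)) (VP i ` {1..i}))"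
    then show "z \<in> {z\<in>V. Adj (VC i) z}" using assms port_in_SA port_in_SB by (auto simp: gverts_def)
  qed
  have fresh_A: "VA (a i) \<notin> insert (VB (b i)) (VP i ` {1..i})" and fresh_B: "VB (b i) \<notin> VP i ` {1..i}"
    by auto
  have "(\<Sum>z\<in>VP i ` {1..i}. g z) = (\<Sum>h\<in>{1..i}. g (VP i h))"
    by (rule sum.reindex_cong[where l = "VP i"]) (auto simp: inj_on_def)
  then show ?thesis unfolding nbrs
    by (simp only: sum.insert[OF _ fresh_A] sum.insert[OF _ fresh_B] finite_insert finite_imageI
        finite_atLeastAtMost add.assoc)
qed

lemma sum_nbrs_VP:
  assumes "i \<in> {1..m}" "1 \<le> h" "h \<le> i"
  shows "(\<Sum>z\<in>{z\<in>V. Adj (VP i h) z}. g z) = g (VC i)"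
proof -
  have "{z\<in>V. Adj (VP i h) z} = {VC i}"
  proof (intro set_eqI iffI)
    fix z :: "('a, 'b) gvert"
    assume "z \<in> {z\<in>V. Adj (VP i h) z}"
    then show "z \<in> {VC i}" by (cases z) (auto simp: gverts_def)
  qed (use assms in \<open>auto simp: gverts_def\<close>)
  then show ?thesis by simp
qed

fun in_cell :: "bool \<Rightarrow> ('a,'b) gvert \<Rightarrow> cell \<Rightarrow> ('a,'b) gvert \<Rightarrow> bool" where
  "in_cell s y (Part q) x = (case x of VA _ \<Rightarrow> s \<noteq> q | VB _ \<Rightarrow> s = q | _ \<Rightarrow> False)"
| "in_cell s y (Port q j) x = (j \<in> {1..m} \<and> (if s \<noteq> q then x = VA (a j) else x = VB (b j)))"
| "in_cell s y (PortNbr q j) x = (j \<in> {1..m} \<and>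
     (case x of VA u \<Rightarrow> s \<noteq> q \<and> EA u (a j) | VB u \<Rightarrow> s = q \<and> EB u (b j) | _ \<Rightarrow> False))"
| "in_cell s y (Conn j) x = (j \<in> {1..m} \<and> x = VC j)"
| "in_cell s y (Pend j) x = (j \<in> {1..m} \<and> (\<exists>h. 1 \<le> h \<and> h \<le> j \<and> x = VP j h))"
| "in_cell s y Target x = (x = y)"
| "in_cell s y TargetNbr x = (case x of VA u \<Rightarrow> (case y of VA v \<Rightarrow> EA u v | _ \<Rightarrow> False)
                         | VB u \<Rightarrow> (case y of VB v \<Rightarrow> EB u v | _ \<Rightarrow> False) | _ \<Rightarrow> False)"

definition cell_ind :: "bool \<Rightarrow> ('a,'b) gvert \<Rightarrow> cell \<Rightarrow> ('a,'b) gvert \<Rightarrow> int" where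
  "cell_ind s y l x = of_bool (in_cell s y l x)"

definition port_adj :: "nat \<Rightarrow> nat \<Rightarrow> bool" where
  "port_adj i j = (i \<in> {1..m} \<and> j \<in> {1..m} \<and> EA (a i) (a j))"

definition target_kind :: "('a,'b) gvert \<Rightarrow> target_kind" where
  "target_kind y = (case y of
       VA u \<Rightarrow> BaseTarget (\<lambda>i. i \<in> {1..m} \<and> a i = u) (\<lambda>i. i \<in> {1..m} \<and> EA (a i) u)
     | VB u \<Rightarrow> BaseTarget (\<lambda>i. i \<in> {1..m} \<and> b i = u) (\<lambda>i. i \<in> {1..m} \<and> EB (b i) u)
     | VC j \<Rightarrow> ConnTarget j | VP j h \<Rightarrow> PendTarget j)"

definition side_ok :: "bool \<Rightarrow> ('a,'b) gvert \<Rightarrow> bool" where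
  "side_ok s y = ((\<forall>u. y = VA u \<longrightarrow> s) \<and> (\<forall>u. y = VB u \<longrightarrow> \<not> s))"

lemma sum_A_nbrs_indicator: "(\<Sum>w\<in>{w\<in>SA. EA u w}. (of_bool (w = c) :: int)) = of_bool (c \<in> SA \<and> EA u c)"
  using sum_of_bool_conj_eq[of "{w\<in>SA. EA u w}" True c] finite_SA by simp

lemma sum_B_nbrs_indicator: "(\<Sum>w\<in>{w\<in>SB. EB u w}. (of_bool (w = c) :: int)) = of_bool (c \<in> SB \<and> EB u c)"
  using sum_of_bool_conj_eq[of "{w\<in>SB. EB u w}" True c] finite_SB by simp

lemma sum_Conn_cells:
  "(\<Sum>i\<in>{1..m}. cf i * cell_ind s y (Conn i) x)
     = (case x of VC j \<Rightarrow> if j \<in> {1..m} then cf j else 0 | _ \<Rightarrow> 0)"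
proof (cases x)
  case (VC j)
  have "(\<Sum>i\<in>{1..m}. cf i * cell_ind s y (Conn i) x) = (\<Sum>i\<in>{1..m}. if i = j then cf i else 0)"
    by (rule sum.cong) (auto simp: cell_ind_def VC)
  also have "\<dots> = (if j \<in> {1..m} then cf j else 0)" by (simp add: sum.delta')
  finally show ?thesis using VC by simp
qed (auto simp: cell_ind_def)

lemma sum_A_nbrs_Port:
  "(\<Sum>w\<in>{w\<in>SA. EA u w}. cell_ind s y (Port q j) (VA w)) = of_bool (j \<in> {1..m} \<and> s \<noteq> q \<and> EA u (a j))"
proof -
  have "(\<Sum>w\<in>{w\<in>SA. EA u w}. cell_ind s y (Port q j) (VA w))
      = (\<Sum>w\<in>{w\<in>SA. EA u w}. of_bool ((j \<in> {1..m} \<and> s \<noteq> q) \<and> w = a j))"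
    by (rule sum.cong) (auto simp: cell_ind_def)
  also have "\<dots> = of_bool ((j \<in> {1..m} \<and> s \<noteq> q) \<and> a j \<in> {w\<in>SA. EA u w})"
    using finite_SA by (intro sum_of_bool_conj_eq) simp
  finally show ?thesis using EA_in by auto
qed

lemma sum_B_nbrs_Port:
  "(\<Sum>w\<in>{w\<in>SB. EB u w}. cell_ind s y (Port q j) (VB w)) = of_bool (j \<in> {1..m} \<and> s = q \<and> EB u (b j))"
proof -
  have "(\<Sum>w\<in>{w\<in>SB. EB u w}. cell_ind s y (Port q j) (VB w))
      = (\<Sum>w\<in>{w\<in>SB. EB u w}. of_bool ((j \<in> {1..m} \<and> s = q) \<and> w = b j))"
    by (rule sum.cong) (auto simp: cell_ind_def)
  also have "\<dots> = of_bool ((j \<in> {1..m} \<and> s = q) \<and> b j \<in> {w\<in>SB. EB u w})"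
    using finite_SB by (intro sum_of_bool_conj_eq) simp
  finally show ?thesis using EB_in by auto
qed

lemma sum_A_nbrs_PortNbr:
  assumes "u \<in> SA" "j \<in> {1..m}"
  shows "(\<Sum>w\<in>{w\<in>SA. EA u w}. cell_ind s y (PortNbr q j) (VA w)) = of_bool (s \<noteq> q)
           * ((int d - int mu) * of_bool (u = a j) + (int lam - int mu) * of_bool (EA u (a j)) + int mu)"
  unfolding strongly_regular_sum_neighbours_adj[OF srgA assms(1) port_in_SA[OF assms(2)], symmetric]
    sum_distrib_left
  by (rule sum.cong) (use assms(2) in \<open>auto simp: cell_ind_def\<close>)

lemma sum_B_nbrs_PortNbr:
  assumes "u \<in> SB" "j \<in> {1..m}"
  shows "(\<Sum>w\<in>{w\<in>SB. EB u w}. cell_ind s y (PortNbr q j) (VB w)) = of_bool (s = q)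
           * ((int d - int mu) * of_bool (u = b j) + (int lam - int mu) * of_bool (EB u (b j)) + int mu)"
  unfolding strongly_regular_sum_neighbours_adj[OF srgB assms(1) port_in_SB[OF assms(2)], symmetric]
    sum_distrib_left
  by (rule sum.cong) (use assms(2) in \<open>auto simp: cell_ind_def\<close>)

lemma sum_A_nbrs_TargetNbr:
  assumes "u \<in> SA" "v \<in> SA"
  shows "(\<Sum>w\<in>{w\<in>SA. EA u w}. cell_ind s (VA v) TargetNbr (VA w))
           = (int d - int mu) * of_bool (u = v) + (int lam - int mu) * of_bool (EA u v) + int mu"
  unfolding strongly_regular_sum_neighbours_adj[OF srgA assms, symmetric]
  by (rule sum.cong) (auto simp: cell_ind_def)

lemma sum_B_nbrs_TargetNbr:
  assumes "u \<in> SB" "v \<in> SB"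
  shows "(\<Sum>w\<in>{w\<in>SB. EB u w}. cell_ind s (VB v) TargetNbr (VB w))
           = (int d - int mu) * of_bool (u = v) + (int lam - int mu) * of_bool (EB u v) + int mu"
  unfolding strongly_regular_sum_neighbours_adj[OF srgB assms, symmetric]
  by (rule sum.cong) (auto simp: cell_ind_def)

lemma cell_step_closed_VA:
  assumes u: "u \<in> SA" and y: "y \<in> V" and s: "side_ok s y"
  shows "(\<Sum>z\<in>{z\<in>V. Adj (VA u) z}. cell_ind s y l z)
           = lc_eval (cell_ind s y) (cell_step d lam mu m port_adj (target_kind y) l) (VA u)"
proof (cases l)
  case (Part q)
  have "(\<Sum>w\<in>{w\<in>SA. EA u w}. cell_ind s y l (VA w)) = int d * of_bool (s \<noteq> q)"
    using degA[OF u] by (simp add: cell_ind_def Part)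
  then show ?thesis by (auto simp: cell_ind_def sum_Conn_cells sum_nbrs_VA[OF u] Part)
next
  case (Port q j)
  then show ?thesis using sum_A_nbrs_Port[of s y q j u] by (auto simp: cell_ind_def sum_Conn_cells sum_nbrs_VA[OF u])
next
  case (PortNbr q j)
  then show ?thesis
    using sum_A_nbrs_PortNbr[OF u, of j s y q] by (auto simp: cell_ind_def sum_Conn_cells sum_nbrs_VA[OF u])
next
  case Target
  then show ?thesis using u y
    by (cases y) (auto simp: cell_ind_def sum_Conn_cells sum_nbrs_VA[OF u] target_kind_def sum_A_nbrs_indicator dest: EA_in)
next
  case TargetNbr
  show ?thesis
  proof (cases y)
    case (VA v)
    then have "v \<in> SA" "s" using y s by (auto simp: gverts_def side_ok_def)
    then show ?thesis
      using sum_A_nbrs_TargetNbr[OF u \<open>v \<in> SA\<close>, of s] VA TargetNbr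
      by (auto simp: cell_ind_def sum_Conn_cells sum_nbrs_VA[OF u] target_kind_def)
  next
    case (VB v)
    then show ?thesis using s TargetNbr by (auto simp: cell_ind_def sum_Conn_cells sum_nbrs_VA[OF u] target_kind_def side_ok_def)
  qed (auto simp: cell_ind_def sum_Conn_cells sum_nbrs_VA[OF u] TargetNbr target_kind_def)
qed (auto simp: cell_ind_def sum_Conn_cells sum_nbrs_VA[OF u])

lemma cell_step_closed_VB:
  assumes u: "u \<in> SB" and y: "y \<in> V" and s: "side_ok s y"
  shows "(\<Sum>z\<in>{z\<in>V. Adj (VB u) z}. cell_ind s y l z)
           = lc_eval (cell_ind s y) (cell_step d lam mu m port_adj (target_kind y) l) (VB u)"
proof (cases l)
  case (Part q)
  have "(\<Sum>w\<in>{w\<in>SB. EB u w}. cell_ind s y l (VB w)) = int d * of_bool (s = q)"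
    using degB[OF u] by (simp add: cell_ind_def Part)
  then show ?thesis by (auto simp: cell_ind_def sum_Conn_cells sum_nbrs_VB[OF u] Part)
next
  case (Port q j)
  then show ?thesis using sum_B_nbrs_Port[of s y q j u] by (auto simp: cell_ind_def sum_Conn_cells sum_nbrs_VB[OF u])
next
  case (PortNbr q j)
  then show ?thesis
    using sum_B_nbrs_PortNbr[OF u, of j s y q] by (auto simp: cell_ind_def sum_Conn_cells sum_nbrs_VB[OF u])
next
  case Target
  then show ?thesis using u y
    by (cases y) (auto simp: cell_ind_def sum_Conn_cells sum_nbrs_VB[OF u] target_kind_def sum_B_nbrs_indicator dest: EB_in)
next
  case TargetNbr
  show ?thesis
  proof (cases y)
    case (VB v)
    then have "v \<in> SB" "\<not> s" using y s by (auto simp: gverts_def side_ok_def)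
    then show ?thesis
      using sum_B_nbrs_TargetNbr[OF u \<open>v \<in> SB\<close>, of s] VB TargetNbr
      by (auto simp: cell_ind_def sum_Conn_cells sum_nbrs_VB[OF u] target_kind_def)
  next
    case (VA v)
    then show ?thesis using s TargetNbr by (auto simp: cell_ind_def sum_Conn_cells sum_nbrs_VB[OF u] target_kind_def side_ok_def)
  qed (auto simp: cell_ind_def sum_Conn_cells sum_nbrs_VB[OF u] TargetNbr target_kind_def)
qed (auto simp: cell_ind_def sum_Conn_cells sum_nbrs_VB[OF u])

lemma cell_step_closed_VC:
  assumes i: "i \<in> {1..m}" and y: "y \<in> V"
  shows "(\<Sum>z\<in>{z\<in>V. Adj (VC i) z}. cell_ind s y l z)
           = lc_eval (cell_ind s y) (cell_step d lam mu m port_adj (target_kind y) l) (VC i)"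
proof (cases l)
  case (Port q j)
  then show ?thesis
    using i by (auto simp: sum_nbrs_VC[OF i] cell_ind_def sum_Conn_cells a_eq_iff b_eq_iff)
next
  case (PortNbr q j)
  then show ?thesis
    using i by (auto simp: sum_nbrs_VC[OF i] cell_ind_def sum_Conn_cells ports_adj_B_iff_A port_adj_def)
next
  case (Pend j)
  have "(\<Sum>h\<in>{1..i}. cell_ind s y l (VP i h)) = of_bool (i = j) * int i"
    using i by (cases "i = j") (auto simp: cell_ind_def Pend)
  then show ?thesis using i by (auto simp: sum_nbrs_VC[OF i] cell_ind_def sum_Conn_cells Pend)
next
  case Target
  show ?thesis
  proof (cases y)
    case (VP j h0)
    then have "1 \<le> h0" "h0 \<le> j" using y by (auto simp: gverts_def)
    then have "(\<Sum>h\<in>{1..i}. cell_ind s y l (VP i h)) = of_bool (i = j)"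
      using VP by (cases "i = j") (auto simp: cell_ind_def Target of_bool_def sum.delta)
    then show ?thesis
      using i VP by (auto simp: sum_nbrs_VC[OF i] cell_ind_def sum_Conn_cells Target target_kind_def)
  qed (use i in \<open>auto simp: sum_nbrs_VC[OF i] cell_ind_def sum_Conn_cells Target target_kind_def\<close>)
next
  case TargetNbr
  then show ?thesis
    using i by (cases y) (auto simp: sum_nbrs_VC[OF i] cell_ind_def sum_Conn_cells target_kind_def)
qed (use i in \<open>auto simp: sum_nbrs_VC[OF i] cell_ind_def sum_Conn_cells\<close>)

lemma cell_step_closed_VP:
  assumes i: "i \<in> {1..m}" and h: "1 \<le> h" "h \<le> i" and y: "y \<in> V"
  shows "(\<Sum>z\<in>{z\<in>V. Adj (VP i h) z}. cell_ind s y l z)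
           = lc_eval (cell_ind s y) (cell_step d lam mu m port_adj (target_kind y) l) (VP i h)"
proof (cases l)
  case Target
  then show ?thesis
    using i h y by (cases y) (auto simp: sum_nbrs_VP[OF i h] cell_ind_def sum_Conn_cells target_kind_def)
next
  case TargetNbr
  then show ?thesis
    using i h by (cases y) (auto simp: sum_nbrs_VP[OF i h] cell_ind_def sum_Conn_cells target_kind_def)
qed (use i h in \<open>auto simp: sum_nbrs_VP[OF i h] cell_ind_def sum_Conn_cells\<close>)

lemma cell_step_closed:
  assumes "x \<in> V" "y \<in> V" "side_ok s y"
  shows "(\<Sum>z\<in>{z\<in>V. Adj x z}. cell_ind s y l z)
           = lc_eval (cell_ind s y) (cell_step d lam mu m port_adj (target_kind y) l) x"
  using assms(1) cell_step_closed_VA[OF _ assms(2,3)] cell_step_closed_VB[OF _ assms(2,3)]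
    cell_step_closed_VC[OF _ assms(2)] cell_step_closed_VP[OF _ _ _ assms(2)]
  by (cases x) (auto simp: gverts_def)

end

section \<open>Reading the classes off \<eta>\<close>

fun is_base :: "vtype \<Rightarrow> bool" where
  "is_base (TBase _) = True"
| "is_base _ = False"

fun base_colour :: "vtype \<Rightarrow> nat option" where
  "base_colour (TBase c) = fst c"
| "base_colour _ = None"

fun base_sees_port :: "vtype \<Rightarrow> nat \<Rightarrow> bool" where
  "base_sees_port (TBase c) j = (Some j \<in># snd c)"
| "base_sees_port _ j = False"

fun conn_colour :: "vtype \<Rightarrow> nat option" where
  "conn_colour (TConn c) = fst c"
| "conn_colour _ = None"

fun pend_colour :: "vtype \<Rightarrow> nat option" where
  "pend_colour (TPend c) = fst c"
| "pend_colour _ = None"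

fun cell_from_eta :: "nat \<Rightarrow> cell \<Rightarrow> vtype \<times> bool \<times> bool \<times> bool \<times> vtype \<Rightarrow> bool" where
  "cell_from_eta m (Part q) (tx, D, I, A, ty) = (is_base tx \<and> (if is_base ty then D \<noteq> q else \<not> q))"
| "cell_from_eta m (Port q j) (tx, D, I, A, ty) =
     (j \<in> {1..m} \<and> is_base tx \<and> (if is_base ty then D \<noteq> q else \<not> q) \<and> base_colour tx = Some j)"
| "cell_from_eta m (PortNbr q j) (tx, D, I, A, ty) =
     (j \<in> {1..m} \<and> is_base tx \<and> (if is_base ty then D \<noteq> q else \<not> q) \<and> base_sees_port tx j)"
| "cell_from_eta m (Conn j) (tx, D, I, A, ty) = (j \<in> {1..m} \<and> conn_colour tx = Some j)"
| "cell_from_eta m (Pend j) (tx, D, I, A, ty) = (j \<in> {1..m} \<and> pend_colour tx = Some j)"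
| "cell_from_eta m Target (tx, D, I, A, ty) = I"
| "cell_from_eta m TargetNbr (tx, D, I, A, ty) = (is_base tx \<and> is_base ty \<and> D \<and> A)"

fun target_kind_of_type :: "nat \<Rightarrow> vtype \<Rightarrow> target_kind" where
  "target_kind_of_type m (TBase c) =
     BaseTarget (\<lambda>i. i \<in> {1..m} \<and> fst c = Some i) (\<lambda>i. i \<in> {1..m} \<and> Some i \<in># snd c)"
| "target_kind_of_type m (TConn c) = ConnTarget (the (fst c))"
| "target_kind_of_type m (TPend c) = PendTarget (the (fst c))"

definition port_adj_of_types :: "nat \<Rightarrow> colour1 list \<Rightarrow> nat \<Rightarrow> nat \<Rightarrow> bool" where
  "port_adj_of_types m ts i j = (i \<in> {1..m} \<and> j \<in> {1..m} \<and> Some j \<in># snd (ts ! (i - 1)))"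

text \<open>For a connecting or pendant target every side is admissible; choosing it as the part of x
makes the classes containing x visible in \<eta>(x,y).\<close>

definition side_choice :: "('a, 'b) gvert \<Rightarrow> ('a, 'b) gvert \<Rightarrow> bool" where
  "side_choice y x = (case y of VA _ \<Rightarrow> True | VB _ \<Rightarrow> False
     | _ \<Rightarrow> (case x of VB _ \<Rightarrow> False | _ \<Rightarrow> True))"

context ported_pair
begin

lemma fst_col1_A_eq_Some_iff: "fst (col1 SA EA a m u) = Some j \<longleftrightarrow> j \<in> {1..m} \<and> a j = u"
  using col0_eq_Some_iff[OF inj_a] by (simp add: col1_def)

lemma fst_col1_B_eq_Some_iff: "fst (col1 SB EB b m u) = Some j \<longleftrightarrow> j \<in> {1..m} \<and> b j = u"
  using col0_eq_Some_iff[OF inj_b] by (simp add: col1_def)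

lemma fst_col1_port: "i \<in> {1..m} \<Longrightarrow> fst (col1 SA EA a m (a i)) = Some i"
  using fst_col1_A_eq_Some_iff by auto

lemma Some_in_col1_A_iff: "Some j \<in># snd (col1 SA EA a m u) \<longleftrightarrow> j \<in> {1..m} \<and> EA u (a j)"
  by (simp add: count_col1_A flip: count_greater_zero_iff)

lemma Some_in_col1_B_iff: "Some j \<in># snd (col1 SB EB b m u) \<longleftrightarrow> j \<in> {1..m} \<and> EB u (b j)"
  by (simp add: count_col1_B flip: count_greater_zero_iff)

lemma side_ok_side_choice: "side_ok (side_choice y x) y"
  by (cases y) (auto simp: side_ok_def side_choice_def)

lemma target_kind_eq_of_type:
  assumes "y \<in> V"
  shows "target_kind y = target_kind_of_type m (gtau SA EA a SB EB b m y)"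
  using assms
  by (cases y) (auto simp: target_kind_def gverts_def fst_col1_A_eq_Some_iff fst_col1_B_eq_Some_iff
      fst_col1_port Some_in_col1_A_iff Some_in_col1_B_iff intro!: ext dest: EA_sym EB_sym)

lemma port_adj_eq_of_types: "port_adj = port_adj_of_types m (tau_seq SA EA a m)"
proof (intro ext)
  fix i j
  have "tau_seq SA EA a m ! (i - 1) = col1 SA EA a m (a i)" if "i \<in> {1..m}"
  proof -
    have "i - 1 < length [1..<m+1]" "[1..<m+1] ! (i - 1) = i"
      using that by (auto simp del: upt_Suc simp: nth_upt)
    then show ?thesis unfolding tau_seq_def by (simp only: nth_map)
  qed
  then show "port_adj i j = port_adj_of_types m (tau_seq SA EA a m) i j"
    by (auto simp: port_adj_def port_adj_of_types_def Some_in_col1_A_iff)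
qed

lemma in_cell_side_choice_iff_eta:
  assumes "x \<in> V" "y \<in> V"
  shows "in_cell (side_choice y x) y l x = cell_from_eta m l (eta SA EA a SB EB b m x y)"
  using assms
  by (cases x; cases y; cases l)
    (auto simp: side_choice_def eta_def gverts_def fst_col1_A_eq_Some_iff fst_col1_B_eq_Some_iff
      Some_in_col1_A_iff Some_in_col1_B_iff a_eq_iff)

lemma walks_eq_eta_combination:
  assumes "x \<in> V" "y \<in> V"
  shows "int (walks V Adj k x y)
    = (\<Sum>(c, l)\<leftarrow>(lc_subst (cell_step d lam mu m port_adj (target_kind y)) ^^ k) [(1, Target)].
         c * of_bool (cell_from_eta m l (eta SA EA a SB EB b m x y)))"
proof -
  have target: "cell_ind (side_choice y x) y Target z = of_bool (z = y)" if "z \<in> V" for z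
    by (simp add: cell_ind_def)
  have "int (walks V Adj k x y) = lc_eval (cell_ind (side_choice y x) y)
      ((lc_subst (cell_step d lam mu m port_adj (target_kind y)) ^^ k) [(1, Target)]) x"
    by (rule walks_eq_lc_eval[OF cell_step_closed[OF _ assms(2) side_ok_side_choice] target assms(1)])
  then show ?thesis
    by (simp add: lc_eval_def cell_ind_def in_cell_side_choice_iff_eta[OF assms])
qed

end

theorem claim2:
  fixes VA1 :: "'a set" and EA1 :: "'a \<Rightarrow> 'a \<Rightarrow> bool" and a1 :: "nat \<Rightarrow> 'a"
    and VB1 :: "'b set" and EB1 :: "'b \<Rightarrow> 'b \<Rightarrow> bool" and b1 :: "nat \<Rightarrow> 'b"
    and VA2 :: "'c set" and EA2 :: "'c \<Rightarrow> 'c \<Rightarrow> bool" and a2 :: "nat \<Rightarrow> 'c"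
    and VB2 :: "'d set" and EB2 :: "'d \<Rightarrow> 'd \<Rightarrow> bool" and b2 :: "nat \<Rightarrow> 'd"
    and m1 m2 n d lam mu :: nat
    and x1 y1 :: "('a, 'b) gvert" and x2 y2 :: "('c, 'd) gvert"
  assumes "valid_pair VA1 EA1 a1 VB1 EB1 b1 m1 n d lam mu"
    and "valid_pair VA2 EA2 a2 VB2 EB2 b2 m2 n d lam mu"
    and "tau_seq VA1 EA1 a1 m1 = tau_seq VA2 EA2 a2 m2"
    and "x1 \<in> gverts VA1 VB1 m1" and "y1 \<in> gverts VA1 VB1 m1"
    and "x2 \<in> gverts VA2 VB2 m2" and "y2 \<in> gverts VA2 VB2 m2"
    and "eta VA1 EA1 a1 VB1 EB1 b1 m1 x1 y1 = eta VA2 EA2 a2 VB2 EB2 b2 m2 x2 y2"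
  shows "\<forall>k. walks (gverts VA1 VB1 m1) (gadj EA1 EB1 a1 b1 m1) k x1 y1
           = walks (gverts VA2 VB2 m2) (gadj EA2 EB2 a2 b2 m2) k x2 y2"
proof
  fix k
  interpret G1: ported_pair VA1 EA1 a1 VB1 EB1 b1 m1 n d lam mu by unfold_locales (rule assms(1))
  interpret G2: ported_pair VA2 EA2 a2 VB2 EB2 b2 m2 n d lam mu by unfold_locales (rule assms(2))
  have m: "m1 = m2"
    using arg_cong[OF assms(3), of length] by (simp del: upt_Suc add: tau_seq_def)
  have port_adj: "G1.port_adj = G2.port_adj"
    using G1.port_adj_eq_of_types G2.port_adj_eq_of_types assms(3) m by simp
  have target_kind: "G1.target_kind y1 = G2.target_kind y2"
    using G1.target_kind_eq_of_type[OF assms(5)] G2.target_kind_eq_of_type[OF assms(7)] assms(8) m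
    by (simp add: eta_def)
  have "int (walks (gverts VA1 VB1 m1) (gadj EA1 EB1 a1 b1 m1) k x1 y1)
      = int (walks (gverts VA2 VB2 m2) (gadj EA2 EB2 a2 b2 m2) k x2 y2)"
    unfolding G1.walks_eq_eta_combination[OF assms(4,5)] G2.walks_eq_eta_combination[OF assms(6,7)]
      port_adj target_kind assms(8)
    by (simp only: m)
  then show "walks (gverts VA1 VB1 m1) (gadj EA1 EB1 a1 b1 m1) k x1 y1
      = walks (gverts VA2 VB2 m2) (gadj EA2 EB2 a2 b2 m2) k x2 y2"
    by simp
qed

end
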